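(* Let $D$ be a regular $(v,k,\lambda,\mu)$-PDS in a finite group $G$ with $0<\mu<k$ and $\sqrt\Delta\in\mathbb{Z}$. Let $H$ be a nontrivial subgroup of the group of linear characters of $G$ all of whose elements have order coprime to $\sqrt\Delta$, let $N=\bigcap_{\xi\in H}\ker\xi$, and let $\theta_\alpha$ denote the common value $\xi(D)$ of the nonprincipal $\xi\in H$. Then for every $a\in G\setminus N$, \[|Na\cap D|=\frac{k-\theta_\alpha}{|H|}.\]
   Context: A $(v,k,\lambda,\mu)$-PDS in a group $G$ of order $v$ is a $k$-subset $D$ such that every nonidentity element of $D$ is $xy^{-1}$ ($x,y\in D$) in exactly $\lambda$ ways and every nonidentity element of $G\setminus D$ in exactly $\mu$ ways; regular means $D=D^{(-1)}$ and $1\notin D$. $\Delta=(\lambda-\mu)^2+4(k-\mu)$. All nonprincipal characters in such an $H$ take the same value on $D$, where $\chi(D)=\sum_{d\in D}\chi(d)$. *)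

theory Defs
  imports "HOL-Algebra.Algebra" "HOL-Analysis.Analysis"
begin

definition pds_reps :: "('a, 'b) monoid_scheme \<Rightarrow> 'a set \<Rightarrow> 'a \<Rightarrow> nat" where
  "pds_reps G D g = card {(x, y). x \<in> D \<and> y \<in> D \<and> x \<otimes>\<^bsub>G\<^esub> inv\<^bsub>G\<^esub> y = g}"

definition is_PDS :: "('a, 'b) monoid_scheme \<Rightarrow> 'a set \<Rightarrow> nat \<Rightarrow> nat \<Rightarrow> nat \<Rightarrow> nat \<Rightarrow> bool" where
  "is_PDS G D v k lam mu \<longleftrightarrow>
     D \<subseteq> carrier G \<and> card (carrier G) = v \<and> card D = k \<and>
     (\<forall>g \<in> D. g \<noteq> \<one>\<^bsub>G\<^esub> \<longrightarrow> pds_reps G D g = lam) \<and>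
     (\<forall>g \<in> carrier G - D. g \<noteq> \<one>\<^bsub>G\<^esub> \<longrightarrow> pds_reps G D g = mu)"

definition regular_PDS :: "('a, 'b) monoid_scheme \<Rightarrow> 'a set \<Rightarrow> bool" where
  "regular_PDS G D \<longleftrightarrow> (\<lambda>d. inv\<^bsub>G\<^esub> d) ` D = D \<and> \<one>\<^bsub>G\<^esub> \<notin> D"

definition pds_Delta :: "nat \<Rightarrow> nat \<Rightarrow> nat \<Rightarrow> int" where
  "pds_Delta k lam mu = (int lam - int mu)^2 + 4 * (int k - int mu)"

text \<open>Linear characters: homomorphisms G -> C^*, normalised to 0 off the carrier
  so that they form a set of functions closed under pointwise product.\<close>
definition lin_chars :: "('a, 'b) monoid_scheme \<Rightarrow> ('a \<Rightarrow> complex) set" where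
  "lin_chars G = {c. (\<forall>x \<in> carrier G. c x \<noteq> 0) \<and>
      (\<forall>x \<in> carrier G. \<forall>y \<in> carrier G. c (x \<otimes>\<^bsub>G\<^esub> y) = c x * c y) \<and>
      (\<forall>x. x \<notin> carrier G \<longrightarrow> c x = 0)}"

definition principal_char :: "('a, 'b) monoid_scheme \<Rightarrow> 'a \<Rightarrow> complex" where
  "principal_char G = (\<lambda>x. if x \<in> carrier G then 1 else 0)"

definition char_group :: "('a, 'b) monoid_scheme \<Rightarrow> ('a \<Rightarrow> complex) monoid" where
  "char_group G = \<lparr> carrier = lin_chars G, monoid.mult = (\<lambda>c d x. c x * d x),
                     one = principal_char G \<rparr>"

definition char_ord :: "('a, 'b) monoid_scheme \<Rightarrow> ('a \<Rightarrow> complex) \<Rightarrow> nat" where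
  "char_ord G c = (LEAST n. 0 < n \<and> (\<forall>x \<in> carrier G. c x ^ n = 1))"

definition char_sum :: "('a \<Rightarrow> complex) \<Rightarrow> 'a set \<Rightarrow> complex" where
  "char_sum c D = (\<Sum>d \<in> D. c d)"

end

theory Submission
  imports Defs "HOL-Number_Theory.Number_Theory"
begin

text \<open>Every nonprincipal character value \<open>\<chi>(D)\<close> satisfies
  \<open>\<chi>(D)\<^sup>2 = (\<lambda> - \<mu>) \<chi>(D) + (k - \<mu>)\<close>, so it is one of two integers that differ by \<open>\<surd>\<Delta>\<close>.
  Since \<open>\<chi>(D)\<close> is an integral combination of roots of unity, the Frobenius congruence
  \<open>\<chi>(D)\<^sup>p \<equiv> \<chi>\<^sup>p(D) (mod p)\<close> holds, hence \<open>\<chi>(D) \<equiv> \<chi>\<^sup>p(D) (mod p)\<close>; for primes \<open>p\<close> not dividing \<open>\<surd>\<Delta>\<close>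
  this forces \<open>\<chi>(D) = \<chi>\<^sup>p(D)\<close> whenever both characters are nonprincipal. Raising to prime
  powers dividing the order reduces every nonprincipal \<open>\<xi> \<in> H\<close> to a character of prime order
  with the same value; two characters of distinct prime orders are linked through their product,
  and two of the same prime order \<open>p\<close> both have value \<open>\<equiv> k (mod p)\<close>. With the value \<open>\<theta>\<close> constant,
  orthogonality of \<open>H\<close> counts \<open>|Na \<inter> D|\<close>.\<close>

section \<open>Integral combinations of a finite multiplicative set of complex numbers\<close>

inductive_set int_span :: "complex set \<Rightarrow> complex set" for U where
  base: "u \<in> U \<Longrightarrow> u \<in> int_span U"
| zero: "0 \<in> int_span U"
| add: "x \<in> int_span U \<Longrightarrow> y \<in> int_span U \<Longrightarrow> x + y \<in> int_span U"
| uminus: "x \<in> int_span U \<Longrightarrow> - x \<in> int_span U"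

lemma int_span_sum: "finite S \<Longrightarrow> (\<And>i. i \<in> S \<Longrightarrow> f i \<in> int_span U) \<Longrightarrow> sum f S \<in> int_span U"
  by (induction S rule: finite_induct) (auto intro: int_span.intros)

lemma int_span_of_nat_mult: "x \<in> int_span U \<Longrightarrow> of_nat n * x \<in> int_span U"
  by (induction n) (auto simp: algebra_simps intro: int_span.intros)

lemma int_span_mult:
  assumes mult_closed: "\<And>u v. u \<in> U \<Longrightarrow> v \<in> U \<Longrightarrow> u * v \<in> U"
    and x: "x \<in> int_span U" and y: "y \<in> int_span U"
  shows "x * y \<in> int_span U"
  using x
proof induct
  case (base u)
  show ?case using y
    by induct (auto simp: algebra_simps intro: int_span.intros mult_closed base)
qed (auto simp: algebra_simps intro: int_span.intros)

lemma int_span_power: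
  assumes "\<And>u v. u \<in> U \<Longrightarrow> v \<in> U \<Longrightarrow> u * v \<in> U" and "1 \<in> U" and "x \<in> int_span U"
  shows "x ^ n \<in> int_span U"
  by (induction n) (auto intro: int_span.base int_span_mult assms)

lemma Ints_if_bounded_denominators_of_powers:
  fixes q :: rat and M :: int
  assumes M: "M \<noteq> 0" and powers: "\<And>j. of_int M * q ^ j \<in> \<int>"
  shows "q \<in> \<int>"
proof -
  obtain a b where qa: "quotient_of q = (a, b)" by (cases "quotient_of q") auto
  have b_pos: "b > 0" and coprime_ab: "coprime a b" and q: "q = of_int a / of_int b"
    using quotient_of_denom_pos[OF qa] quotient_of_coprime[OF qa] quotient_of_div[OF qa] by auto
  have b_power_dvd: "b ^ j dvd M" for j
  proof -
    obtain c where "of_int M * q ^ j = of_int c" using powers[of j] by (auto elim: Ints_cases)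
    then have "of_int M * (of_int a ^ j / of_int b ^ j) = (of_int c :: rat)"
      unfolding q by (simp only: power_divide)
    then have "of_int M * of_int a ^ j = (of_int c * of_int b ^ j :: rat)"
      using b_pos by (simp add: divide_eq_eq mult.assoc[symmetric] del: of_int_power)
    then have "M * a ^ j = c * b ^ j" by (metis of_int_eq_iff of_int_mult of_int_power)
    then have "b ^ j dvd M * a ^ j" by simp
    moreover have "coprime (b ^ j) (a ^ j)" using coprime_ab by (simp add: coprime_commute)
    ultimately show ?thesis using coprime_dvd_mult_left_iff by blast
  qed
  have "b = 1"
  proof (rule ccontr)
    assume "b \<noteq> 1"
    define j where "j = nat \<bar>M\<bar>"
    have "\<bar>b ^ j\<bar> \<le> \<bar>M\<bar>" by (rule dvd_imp_le_int[OF M b_power_dvd])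
    moreover have "(2::int) ^ j \<le> b ^ j" using b_pos \<open>b \<noteq> 1\<close> by (intro power_mono) auto
    moreover have "int j < 2 ^ j" by (rule of_nat_less_two_power)
    ultimately show False using b_pos unfolding j_def by simp
  qed
  then show ?thesis using q by simp
qed

lemma ex_rat_linear_functional_complex:
  "\<exists>L::complex \<Rightarrow> rat. (\<forall>x y. L (x + y) = L x + L y) \<and> (\<forall>r x. L (of_rat r * x) = r * L x) \<and> L 1 = 1"
proof -
  interpret V1: vector_space "\<lambda>(r::rat) (x::complex). of_rat r * x"
    by unfold_locales (auto simp: algebra_simps of_rat_add of_rat_mult)
  interpret V2: vector_space "(*) :: rat \<Rightarrow> rat \<Rightarrow> rat"
    by unfold_locales (auto simp: algebra_simps)
  interpret VP: vector_space_pair "\<lambda>(r::rat) (x::complex). of_rat r * x" "(*) :: rat \<Rightarrow> rat \<Rightarrow> rat" ..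
  have "V1.independent {1}" by simp
  from VP.linear_independent_extend[OF this, of "\<lambda>_. 1"] obtain L where
    "Vector_Spaces.linear (\<lambda>(r::rat) (x::complex). of_rat r * x) (*) L" "L 1 = 1" by auto
  then show ?thesis by (auto simp: Vector_Spaces.linear_iff)
qed

text \<open>A \<open>\<rat>\<close>-linear functional \<open>L\<close> with \<open>L 1 = 1\<close> maps \<open>int_span U\<close> into \<open>M\<^sup>-\<^sup>1\<int>\<close>, where \<open>M\<close> is a
  common denominator of \<open>L(U)\<close>; as \<open>U\<close> is multiplicatively closed, this applies to all powers of a
  rational \<open>q \<in> int_span U\<close>.\<close>

lemma int_span_rational_in_Ints:
  assumes fin: "finite U" and one: "1 \<in> U" and mult_closed: "\<And>u v. u \<in> U \<Longrightarrow> v \<in> U \<Longrightarrow> u * v \<in> U"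
    and x: "x \<in> int_span U" and q: "x = of_rat q"
  shows "q \<in> \<int>"
proof -
  obtain L :: "complex \<Rightarrow> rat" where L_add: "\<And>x y. L (x + y) = L x + L y"
    and L_scale: "\<And>r x. L (of_rat r * x) = r * L x" and L_1: "L 1 = 1"
    using ex_rat_linear_functional_complex by blast
  have L_0: "L 0 = 0" using L_add[of 0 0] by simp
  have L_uminus: "L (- y) = - L y" for y using L_add[of "-y" y] L_0 by (simp add: eq_neg_iff_add_eq_0)
  define den where "den u = snd (quotient_of (L u))" for u
  define M where "M = (\<Prod>u\<in>U. den u)"
  have den_pos: "den u > 0" for u unfolding den_def by (metis prod.collapse quotient_of_denom_pos)
  have M: "M \<noteq> 0" unfolding M_def using den_pos fin by (simp add: prod_zero_iff) (metis less_irrefl)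
  have M_L_base: "of_int M * L u \<in> \<int>" if u: "u \<in> U" for u
  proof -
    obtain a where qa: "quotient_of (L u) = (a, den u)" unfolding den_def by (metis prod.collapse)
    have "L u = of_int a / of_int (den u)" using quotient_of_div[OF qa] .
    moreover have "M = den u * (\<Prod>v\<in>U - {u}. den v)" unfolding M_def using fin u by (simp add: prod.remove)
    ultimately have "of_int M * L u = of_int (a * (\<Prod>v\<in>U - {u}. den v))"
      using den_pos[of u] by (simp add: field_simps)
    then show ?thesis by (metis Ints_of_int)
  qed
  have M_L: "of_int M * L y \<in> \<int>" if "y \<in> int_span U" for y
    using that by induct (auto simp: M_L_base L_0 L_add L_uminus distrib_left)
  have "of_int M * q ^ j \<in> \<int>" for j
  proof -
    have "L (x ^ j) = q ^ j" using L_scale[of "q ^ j" 1] L_1 by (simp add: q of_rat_power)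
    then show ?thesis using M_L int_span_power[OF mult_closed one x] by metis
  qed
  then show ?thesis using Ints_if_bounded_denominators_of_powers[OF M] by blast
qed

lemma int_span_dvd_if_of_int_eq:
  assumes "finite U" and "1 \<in> U" and "\<And>u v. u \<in> U \<Longrightarrow> v \<in> U \<Longrightarrow> u * v \<in> U"
    and r: "r \<in> int_span U" and eq: "of_int t = of_int p * r" and p: "p \<noteq> 0"
  shows "p dvd t"
proof -
  have "r = of_rat (of_int t / of_int p)" using eq p by (simp add: of_rat_divide field_simps)
  from int_span_rational_in_Ints[OF assms(1-3) r this] obtain c where "of_int t / of_int p = (of_int c :: rat)"
    by (auto elim: Ints_cases)
  then have "t = c * p" using p by (simp add: field_simps) (metis of_int_eq_iff of_int_mult)
  then show ?thesis by simp
qed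

lemma int_span_power_add_prime:
  assumes mult_closed: "\<And>u v. u \<in> U \<Longrightarrow> v \<in> U \<Longrightarrow> u * v \<in> U" and one: "1 \<in> U"
    and a: "a \<in> int_span U" and b: "b \<in> int_span U" and p: "Factorial_Ring.prime (p::nat)"
  shows "\<exists>r\<in>int_span U. (a + b) ^ p = a ^ p + b ^ p + of_nat p * r"
proof -
  have p_pos: "p > 0" using p prime_gt_0_nat by blast
  define t where "t k = of_nat (p choose k) * a ^ k * b ^ (p - k)" for k
  have "{..p} = insert 0 (insert p {1..<p})" by auto
  then have "(a + b) ^ p = a ^ p + b ^ p + (\<Sum>k\<in>{1..<p}. t k)"
    unfolding binomial_ring t_def[symmetric] using p_pos by (simp add: sum.insert t_def)
  moreover define r where "r = (\<Sum>k\<in>{1..<p}. of_nat ((p choose k) div p) * (a ^ k * b ^ (p - k)))"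
  have "(\<Sum>k\<in>{1..<p}. t k) = of_nat p * r"
    unfolding r_def sum_distrib_left
  proof (rule sum.cong)
    fix k assume "k \<in> {1..<p}"
    then have "p dvd (p choose k)" using p by (intro dvd_choose_prime) auto
    then show "t k = of_nat p * (of_nat ((p choose k) div p) * (a ^ k * b ^ (p - k)))"
      unfolding t_def by (metis (no_types, lifting) dvd_mult_div_cancel mult.assoc of_nat_mult)
  qed simp
  moreover have "r \<in> int_span U" unfolding r_def
    by (intro int_span_sum int_span_of_nat_mult int_span_mult[OF mult_closed]
        int_span_power[OF mult_closed one] a b) auto
  ultimately show ?thesis by auto
qed

lemma int_span_power_sum_prime:
  assumes mult_closed: "\<And>u v. u \<in> U \<Longrightarrow> v \<in> U \<Longrightarrow> u * v \<in> U" and one: "1 \<in> U"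
    and p: "Factorial_Ring.prime (p::nat)" and "finite S" and "\<And>i. i \<in> S \<Longrightarrow> f i \<in> int_span U"
  shows "\<exists>r\<in>int_span U. (\<Sum>i\<in>S. f i) ^ p - (\<Sum>i\<in>S. f i ^ p) = of_nat p * r"
  using assms(4,5)
proof (induction S rule: finite_induct)
  case empty
  then show ?case using p prime_gt_0_nat by (intro bexI[of _ 0]) (auto intro: int_span.zero)
next
  case (insert i S)
  obtain r1 where r1: "r1 \<in> int_span U" "(\<Sum>i\<in>S. f i) ^ p - (\<Sum>i\<in>S. f i ^ p) = of_nat p * r1"
    using insert by auto
  have "f i \<in> int_span U" and "(\<Sum>i\<in>S. f i) \<in> int_span U"
    using insert by (auto intro: int_span_sum)
  from int_span_power_add_prime[OF mult_closed one this p] obtain r2 where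
    r2: "r2 \<in> int_span U" "(f i + (\<Sum>i\<in>S. f i)) ^ p = f i ^ p + (\<Sum>i\<in>S. f i) ^ p + of_nat p * r2"
    by auto
  have "(\<Sum>i\<in>insert i S. f i) ^ p - (\<Sum>i\<in>insert i S. f i ^ p) = of_nat p * (r1 + r2)"
    using insert(1,2) r1(2) r2(2) by (simp add: algebra_simps)
  then show ?case using r1(1) r2(1) by (auto intro: int_span.add)
qed

lemma int_power_prime_cong:
  fixes A :: int assumes p: "Factorial_Ring.prime (p::nat)"
  shows "[A ^ p = A] (mod int p)"
proof -
  define a where "a = nat (A mod int p)"
  have p_pos: "p > 0" using p prime_gt_0_nat by blast
  have A_a: "[A = int a] (mod int p)" unfolding a_def using p_pos by (simp add: cong_def)
  have "[a * a ^ (p - 1) = a] (mod p)"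
  proof (cases "p dvd a")
    case True
    then show ?thesis by (simp add: cong_0_iff cong_def)
  next
    case False
    then show ?thesis using cong_scalar_left[OF fermat_theorem[OF p False], of a] by simp
  qed
  then have "[a ^ p = a] (mod p)" using p_pos by (metis Suc_diff_1 power_Suc)
  then have "[int a ^ p = int a] (mod int p)" by (metis cong_int_iff of_nat_power)
  then show ?thesis using A_a cong_pow[OF A_a, of p] by (meson cong_sym cong_trans)
qed

section \<open>Linear characters of a finite group\<close>

definition char_power :: "('a, 'b) monoid_scheme \<Rightarrow> ('a \<Rightarrow> complex) \<Rightarrow> nat \<Rightarrow> 'a \<Rightarrow> complex" where
  "char_power G c n = (\<lambda>x. if x \<in> carrier G then c x ^ n else 0)"

definition kernel_of_chars :: "('a, 'b) monoid_scheme \<Rightarrow> ('a \<Rightarrow> complex) set \<Rightarrow> 'a set" where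
  "kernel_of_chars G H = {g \<in> carrier G. \<forall>\<xi> \<in> H. \<xi> g = 1}"

locale finite_group = group G for G (structure) +
  assumes finite_carrier: "finite (carrier G)"
begin

lemma lin_char_mult: "c \<in> lin_chars G \<Longrightarrow> x \<in> carrier G \<Longrightarrow> y \<in> carrier G \<Longrightarrow> c (x \<otimes> y) = c x * c y"
  by (simp add: lin_chars_def)

lemma lin_char_nonzero: "c \<in> lin_chars G \<Longrightarrow> x \<in> carrier G \<Longrightarrow> c x \<noteq> 0"
  by (simp add: lin_chars_def)

lemma lin_char_outside: "c \<in> lin_chars G \<Longrightarrow> x \<notin> carrier G \<Longrightarrow> c x = 0"
  by (simp add: lin_chars_def)

lemma lin_char_one: assumes "c \<in> lin_chars G" shows "c \<one> = 1"
  using lin_char_mult[OF assms, of \<one> \<one>] lin_char_nonzero[OF assms, of \<one>] by simp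

lemma lin_char_inv: "c \<in> lin_chars G \<Longrightarrow> x \<in> carrier G \<Longrightarrow> c (inv x) * c x = 1"
  by (metis lin_char_mult lin_char_one inv_closed l_inv)

lemma lin_char_root_of_unity: assumes "c \<in> lin_chars G" "x \<in> carrier G" shows "c x ^ Coset.order G = 1"
proof -
  have "c (x [^] n) = c x ^ n" for n :: nat
    by (induction n) (simp_all add: assms lin_char_one lin_char_mult)
  then show ?thesis using pow_order_eq_1[OF assms(2)] lin_char_one[OF assms(1)] by metis
qed

lemma order_pos: "Coset.order G > 0"
  using finite_carrier order_gt_0_iff_finite by blast

lemma finite_lin_chars: "finite (lin_chars G)"
proof -
  define U where "U = {z::complex. z ^ Coset.order G = 1}"
  define extend where "extend f x = (if x \<in> carrier G then f x else 0)" for f :: "'a \<Rightarrow> complex" and x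
  have "lin_chars G \<subseteq> extend ` (PiE (carrier G) (\<lambda>_. U))"
  proof
    fix c assume c: "c \<in> lin_chars G"
    have "c = extend (restrict c (carrier G))"
      using lin_char_outside[OF c] by (auto simp: fun_eq_iff extend_def)
    moreover have "restrict c (carrier G) \<in> PiE (carrier G) (\<lambda>_. U)"
      using lin_char_root_of_unity[OF c] by (auto simp: U_def)
    ultimately show "c \<in> extend ` (PiE (carrier G) (\<lambda>_. U))" by blast
  qed
  moreover have "finite U" unfolding U_def using order_pos by (intro finite_roots_unity) simp
  ultimately show ?thesis using finite_carrier by (metis finite_PiE finite_imageI finite_subset)
qed

lemma principal_char_iff: "c \<in> lin_chars G \<Longrightarrow> c = principal_char G \<longleftrightarrow> (\<forall>x\<in>carrier G. c x = 1)"
  by (auto simp: principal_char_def fun_eq_iff lin_char_outside)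

lemma char_power_in_lin_chars: "c \<in> lin_chars G \<Longrightarrow> char_power G c n \<in> lin_chars G"
  by (simp add: lin_chars_def char_power_def power_mult_distrib)

lemma char_power_0: "char_power G c 0 = principal_char G"
  by (auto simp: char_power_def principal_char_def fun_eq_iff)

lemma char_power_Suc: "c \<in> lin_chars G \<Longrightarrow> char_power G c (Suc n) = (\<lambda>x. c x * char_power G c n x)"
  by (auto simp: char_power_def fun_eq_iff lin_char_outside)

lemma char_power_1: "c \<in> lin_chars G \<Longrightarrow> char_power G c 1 = c"
  by (auto simp: char_power_def fun_eq_iff lin_char_outside)

lemma char_power_char_power: "char_power G (char_power G c m) n = char_power G c (m * n)"
  by (simp add: char_power_def fun_eq_iff power_mult)

lemma char_power_mult_principal_left:
  assumes "\<alpha> \<in> lin_chars G" "char_power G \<alpha> n = principal_char G"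
  shows "char_power G (\<lambda>x. \<alpha> x * \<beta> x) n = char_power G \<beta> n"
  using assms principal_char_iff[OF char_power_in_lin_chars]
  by (auto simp: fun_eq_iff char_power_def power_mult_distrib)

lemma char_ord_pos_pow:
  assumes "c \<in> lin_chars G"
  shows "char_ord G c > 0" "\<forall>x\<in>carrier G. c x ^ char_ord G c = 1"
proof -
  have "\<exists>n. 0 < n \<and> (\<forall>x\<in>carrier G. c x ^ n = 1)"
    using order_pos lin_char_root_of_unity[OF assms] by blast
  then have "0 < char_ord G c \<and> (\<forall>x\<in>carrier G. c x ^ char_ord G c = 1)"
    unfolding char_ord_def by (rule LeastI_ex)
  then show "char_ord G c > 0" "\<forall>x\<in>carrier G. c x ^ char_ord G c = 1" by auto
qed

lemma char_power_eq_principal_iff: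
  assumes c: "c \<in> lin_chars G"
  shows "char_power G c n = principal_char G \<longleftrightarrow> char_ord G c dvd n"
proof -
  define m where "m = char_ord G c"
  have m_pos: "m > 0" and pow_m: "\<And>x. x \<in> carrier G \<Longrightarrow> c x ^ m = 1"
    using char_ord_pos_pow[OF c] unfolding m_def by auto
  have pow_mod: "c x ^ n = c x ^ (n mod m)" if "x \<in> carrier G" for x
    using pow_m[OF that] by (metis div_mult_mod_eq mult.commute mult_1 power_add power_mult power_one)
  have "char_power G c n = principal_char G \<longleftrightarrow> (\<forall>x\<in>carrier G. c x ^ (n mod m) = 1)"
    using principal_char_iff[OF char_power_in_lin_chars[OF c]] by (simp add: char_power_def pow_mod)
  also have "\<dots> \<longleftrightarrow> n mod m = 0"
  proof
    assume pow: "\<forall>x\<in>carrier G. c x ^ (n mod m) = 1"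
    show "n mod m = 0"
    proof (rule ccontr)
      assume "n mod m \<noteq> 0"
      then have "m \<le> n mod m" using pow unfolding m_def char_ord_def by (intro Least_le) simp
      then show False using mod_less_divisor[OF m_pos, of n] by linarith
    qed
  qed simp
  finally show ?thesis unfolding m_def by auto
qed

lemma char_ord_eq_1_iff: "c \<in> lin_chars G \<Longrightarrow> char_ord G c = 1 \<longleftrightarrow> c = principal_char G"
  by (metis char_power_1 char_power_eq_principal_iff nat_dvd_1_iff_1)

lemma char_ord_eq_prime:
  assumes "c \<in> lin_chars G" "c \<noteq> principal_char G" "char_power G c p = principal_char G" "Factorial_Ring.prime p"
  shows "char_ord G c = p"
  using assms char_power_eq_principal_iff char_ord_eq_1_iff by (metis prime_nat_iff)

lemma sum_nonprincipal_char:
  assumes c: "c \<in> lin_chars G" and nonprincipal: "c \<noteq> principal_char G"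
  shows "(\<Sum>x\<in>carrier G. c x) = 0"
proof -
  obtain h where h: "h \<in> carrier G" "c h \<noteq> 1" using principal_char_iff[OF c] nonprincipal by auto
  have "(\<Sum>x\<in>carrier G. c x) = (\<Sum>x\<in>carrier G. c (h \<otimes> x))"
    by (rule sum.reindex_bij_witness[of _ "\<lambda>x. h \<otimes> x" "\<lambda>x. inv h \<otimes> x"])
      (auto simp: h(1) m_assoc[symmetric])
  also have "\<dots> = c h * (\<Sum>x\<in>carrier G. c x)" using h(1) by (simp add: lin_char_mult[OF c] sum_distrib_left)
  finally have "(1 - c h) * (\<Sum>x\<in>carrier G. c x) = 0" by (simp add: algebra_simps)
  then show ?thesis using h(2) by simp
qed

lemma char_sum_char_power_prime_cong:
  assumes c: "c \<in> lin_chars G" and p: "Factorial_Ring.prime p" and D: "D \<subseteq> carrier G"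
    and A: "char_sum c D = of_int A" and B: "char_sum (char_power G c p) D = of_int B"
  shows "[A = B] (mod int p)"
proof -
  define U where "U = {z::complex. z ^ Coset.order G = 1}"
  have U: "finite U" "1 \<in> U" "\<And>u v. u \<in> U \<Longrightarrow> v \<in> U \<Longrightarrow> u * v \<in> U"
    unfolding U_def using order_pos by (auto intro: finite_roots_unity simp: power_mult_distrib)
  have "finite D" using D finite_carrier finite_subset by blast
  moreover have "c d \<in> int_span U" if "d \<in> D" for d
    using that D lin_char_root_of_unity[OF c] by (auto simp: U_def intro: int_span.base)
  ultimately obtain r where r: "r \<in> int_span U" "(\<Sum>d\<in>D. c d) ^ p - (\<Sum>d\<in>D. c d ^ p) = of_nat p * r"
    using int_span_power_sum_prime[OF U(3) U(2) p] by blast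
  have "(\<Sum>d\<in>D. c d ^ p) = char_sum (char_power G c p) D"
    unfolding char_sum_def char_power_def using D by (intro sum.cong) auto
  then have "of_int (A ^ p - B) = of_int (int p) * r" using r(2) A B by (simp add: char_sum_def)
  then have "int p dvd A ^ p - B" using int_span_dvd_if_of_int_eq[OF U r(1)] p prime_gt_0_nat by force
  then show ?thesis using int_power_prime_cong[OF p, of A]
    by (metis cong_iff_dvd_diff cong_sym cong_trans)
qed

lemma char_sum_square_eq_sum_pds_reps:
  assumes c: "c \<in> lin_chars G" and D: "D \<subseteq> carrier G" and inv_D: "(\<lambda>d. inv d) ` D = D"
  shows "char_sum c D ^ 2 = (\<Sum>g\<in>carrier G. of_nat (pds_reps G D g) * c g)"
proof -
  let ?q = "\<lambda>p. fst p \<otimes> inv (snd p)"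
  have fin_D: "finite D" using D finite_carrier finite_subset by blast
  have "inj_on (\<lambda>d. inv d) D" using D by (intro inj_onI) (metis inv_inv subsetD)
  then have "(\<Sum>y\<in>D. c (inv y)) = char_sum c D"
    using sum.reindex[of "\<lambda>d. inv d" D c] inv_D by (simp add: char_sum_def)
  then have "char_sum c D ^ 2 = char_sum c D * (\<Sum>y\<in>D. c (inv y))"
    by (simp add: power2_eq_square)
  also have "\<dots> = (\<Sum>x\<in>D. \<Sum>y\<in>D. c (x \<otimes> inv y))"
    unfolding char_sum_def sum_product using D by (intro sum.cong refl) (auto simp: lin_char_mult[OF c] subsetD)
  also have "\<dots> = (\<Sum>p\<in>D \<times> D. c (?q p))" by (simp add: sum.cartesian_product split_def)
  also have "\<dots> = (\<Sum>g\<in>carrier G. \<Sum>p\<in>{p \<in> D \<times> D. ?q p = g}. c (?q p))"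
    using D by (intro sum.group[symmetric] finite_carrier) (auto simp: fin_D subset_iff)
  also have "\<dots> = (\<Sum>g\<in>carrier G. of_nat (pds_reps G D g) * c g)"
  proof (intro sum.cong refl)
    fix g
    have "(\<Sum>p\<in>{p \<in> D \<times> D. ?q p = g}. c (?q p)) = (\<Sum>p\<in>{p \<in> D \<times> D. ?q p = g}. c g)"
      by (rule sum.cong) auto
    moreover have "{p \<in> D \<times> D. ?q p = g} = {(x, y). x \<in> D \<and> y \<in> D \<and> x \<otimes> inv y = g}" by auto
    ultimately show "(\<Sum>p\<in>{p \<in> D \<times> D. ?q p = g}. c (?q p)) = of_nat (pds_reps G D g) * c g"
      unfolding pds_reps_def by simp
  qed
  finally show ?thesis .
qed

end

lemma (in group) r_coset_inter_eq:
  assumes "N \<subseteq> carrier G" "D \<subseteq> carrier G" "a \<in> carrier G"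
  shows "(N #> a) \<inter> D = {d \<in> D. d \<otimes> inv a \<in> N}"
proof safe
  fix d assume "d \<in> N #> a"
  then obtain n where n: "n \<in> N" "d = n \<otimes> a" unfolding r_coset_def by auto
  then have "d \<otimes> inv a = n" using assms(1,3) by (simp add: m_assoc subsetD)
  then show "d \<otimes> inv a \<in> N" using n(1) by simp
next
  fix d assume d: "d \<in> D" "d \<otimes> inv a \<in> N"
  then have "d = (d \<otimes> inv a) \<otimes> a" using assms(2,3) by (simp add: m_assoc subsetD)
  then show "d \<in> N #> a" using d(2) unfolding r_coset_def by blast
qed

locale char_subgroup = finite_group G for G (structure) +
  fixes H assumes subgroup_H: "subgroup H (char_group G)"
begin

lemma subgroup_subset_lin_chars: "H \<subseteq> lin_chars G"
  using subgroup.subset[OF subgroup_H] by (simp add: char_group_def)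

lemma finite_subgroup: "finite H"
  using subgroup_subset_lin_chars finite_lin_chars finite_subset by blast

lemma principal_char_in_subgroup: "principal_char G \<in> H"
  using subgroup.one_closed[OF subgroup_H] by (simp add: char_group_def)

lemma char_mult_in_subgroup: "c \<in> H \<Longrightarrow> d \<in> H \<Longrightarrow> (\<lambda>x. c x * d x) \<in> H"
  using subgroup.m_closed[OF subgroup_H, of c d] by (simp add: char_group_def)

lemma char_power_in_subgroup: "c \<in> H \<Longrightarrow> char_power G c n \<in> H"
  by (induction n) (simp_all add: char_power_0 principal_char_in_subgroup char_power_Suc
      subgroup_subset_lin_chars[THEN subsetD] char_mult_in_subgroup)

lemma sum_subgroup_chars:
  assumes g: "g \<in> carrier G"
  shows "(\<Sum>\<xi>\<in>H. \<xi> g) = (if g \<in> kernel_of_chars G H then of_nat (card H) else 0)"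
proof (cases "g \<in> kernel_of_chars G H")
  case True
  then have "(\<Sum>\<xi>\<in>H. \<xi> g) = (\<Sum>\<xi>\<in>H. 1)" by (intro sum.cong) (auto simp: kernel_of_chars_def)
  then show ?thesis using True by simp
next
  case False
  then obtain \<eta> where \<eta>: "\<eta> \<in> H" "\<eta> g \<noteq> 1" using g by (auto simp: kernel_of_chars_def)
  define f where "f \<xi> = (\<lambda>x. \<eta> x * \<xi> x)" for \<xi> :: "'a \<Rightarrow> complex"
  have inj: "inj_on f H"
  proof (rule inj_onI)
    fix \<xi> \<xi>' assume \<xi>: "\<xi> \<in> H" "\<xi>' \<in> H" and eq: "f \<xi> = f \<xi>'"
    show "\<xi> = \<xi>'"
    proof
      fix x
      show "\<xi> x = \<xi>' x"
      proof (cases "x \<in> carrier G")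
        case True
        then have "\<eta> x \<noteq> 0" using lin_char_nonzero \<eta>(1) subgroup_subset_lin_chars by blast
        then show ?thesis using fun_cong[OF eq, of x] by (simp add: f_def)
      next
        case False
        then show ?thesis using \<xi> subgroup_subset_lin_chars by (simp add: lin_char_outside subsetD)
      qed
    qed
  qed
  have "f ` H \<subseteq> H" using \<eta>(1) char_mult_in_subgroup by (auto simp: f_def)
  then have "(\<Sum>\<xi>\<in>H. \<xi> g) = (\<Sum>\<xi>\<in>f ` H. \<xi> g)"
    using endo_inj_surj[OF finite_subgroup _ inj] by simp
  also have "\<dots> = (\<Sum>\<xi>\<in>H. f \<xi> g)" using sum.reindex[OF inj, of "\<lambda>\<xi>. \<xi> g"] by simp
  also have "\<dots> = \<eta> g * (\<Sum>\<xi>\<in>H. \<xi> g)" unfolding f_def by (simp add: sum_distrib_left)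
  finally have "(1 - \<eta> g) * (\<Sum>\<xi>\<in>H. \<xi> g) = 0" by (simp add: algebra_simps)
  then show ?thesis using \<eta>(2) False by simp
qed

lemma inv_in_kernel_of_chars_iff:
  assumes "a \<in> carrier G"
  shows "inv a \<in> kernel_of_chars G H \<longleftrightarrow> a \<in> kernel_of_chars G H"
proof -
  have "\<xi> (inv a) = 1 \<longleftrightarrow> \<xi> a = 1" if "\<xi> \<in> H" for \<xi>
    using lin_char_inv[of \<xi> a] that assms subgroup_subset_lin_chars by auto
  then show ?thesis using assms by (auto simp: kernel_of_chars_def)
qed

end

section \<open>Character values of a regular partial difference set\<close>

locale pds = finite_group G for G (structure) +
  fixes D :: "'a set" and v k lam mu s :: nat
  assumes is_PDS: "is_PDS G D v k lam mu" and regular: "regular_PDS G D"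
    and sqrt_Delta: "int s ^ 2 = pds_Delta k lam mu"
begin

lemma D_subset: "D \<subseteq> carrier G"
  using is_PDS by (simp add: is_PDS_def)

lemma one_notin_D: "\<one> \<notin> D"
  using regular by (simp add: regular_PDS_def)

lemma pds_reps_one: "pds_reps G D \<one> = k"
proof -
  have "{(x, y). x \<in> D \<and> y \<in> D \<and> x \<otimes> inv y = \<one>} = (\<lambda>x. (x, x)) ` D"
    using D_subset by (auto simp: subset_iff dest: inv_equality)
  moreover have "card ((\<lambda>x. (x, x)) ` D) = card D" by (rule card_image) (auto simp: inj_on_def)
  ultimately show ?thesis using is_PDS by (simp add: pds_reps_def is_PDS_def)
qed

lemma char_sum_principal: "char_sum (principal_char G) D = of_nat k"
  using D_subset is_PDS by (simp add: char_sum_def principal_char_def subset_iff is_PDS_def)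

lemma sum_pds_reps_char:
  assumes c: "c \<in> lin_chars G" and nonprincipal: "c \<noteq> principal_char G"
  shows "(\<Sum>g\<in>carrier G. of_nat (pds_reps G D g) * c g)
    = of_nat k + of_nat lam * char_sum c D - of_nat mu * (char_sum c D + 1)"
proof -
  define R where "R = carrier G - {\<one>} - D"
  have split: "(\<Sum>g\<in>carrier G. f g) = f \<one> + (\<Sum>g\<in>D. f g) + (\<Sum>g\<in>R. f g)" for f :: "'a \<Rightarrow> complex"
  proof -
    have "D \<subseteq> carrier G - {\<one>}" using D_subset one_notin_D by auto
    then show ?thesis unfolding R_def
      using sum.remove[OF finite_carrier one_closed, of f] sum.subset_diff[of D "carrier G - {\<one>}" f]
        finite_carrier by simp
  qed
  have reps_D: "pds_reps G D g = lam" if "g \<in> D" for g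
    using that is_PDS one_notin_D by (auto simp: is_PDS_def)
  have reps_R: "pds_reps G D g = mu" if "g \<in> R" for g
    using that is_PDS by (auto simp: is_PDS_def R_def)
  have sum_R: "(\<Sum>g\<in>R. c g) = - char_sum c D - 1"
    using split[of c] sum_nonprincipal_char[OF c nonprincipal] lin_char_one[OF c]
    by (simp add: char_sum_def eq_neg_iff_add_eq_0 algebra_simps)
  have "(\<Sum>g\<in>carrier G. of_nat (pds_reps G D g) * c g)
      = of_nat k * c \<one> + (\<Sum>g\<in>D. of_nat lam * c g) + (\<Sum>g\<in>R. of_nat mu * c g)"
    using split[of "\<lambda>g. of_nat (pds_reps G D g) * c g"] by (simp add: pds_reps_one reps_D reps_R)
  also have "\<dots> = of_nat k + of_nat lam * char_sum c D + of_nat mu * (\<Sum>g\<in>R. c g)"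
    by (simp add: char_sum_def sum_distrib_left lin_char_one[OF c])
  finally show ?thesis by (simp add: sum_R algebra_simps)
qed

lemma char_sum_nonprincipal_quadratic:
  assumes "c \<in> lin_chars G" and "c \<noteq> principal_char G"
  shows "char_sum c D ^ 2 = of_int (int lam - int mu) * char_sum c D + (of_nat k - of_nat mu)"
  using char_sum_square_eq_sum_pds_reps[OF assms(1) D_subset] sum_pds_reps_char[OF assms] regular
  by (simp add: regular_PDS_def algebra_simps)

lemma char_sum_nonprincipal_cases:
  assumes "c \<in> lin_chars G" and "c \<noteq> principal_char G"
  obtains A where "char_sum c D = of_int A"
    and "2 * A = int lam - int mu + int s \<or> 2 * A = int lam - int mu - int s"
proof -
  define lm where "lm = int lam - int mu"
  define \<theta> where "\<theta> = char_sum c D"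
  have Delta: "int s ^ 2 = lm ^ 2 + 4 * (int k - int mu)"
    using sqrt_Delta by (simp add: pds_Delta_def lm_def)
  then have "(int s + lm) * (int s - lm) = 4 * (int k - int mu)" by (simp add: algebra_simps power2_eq_square)
  then have "even ((int s + lm) * (int s - lm))" by simp
  then have "even (int s + lm) \<or> even (int s - lm)" by (simp only: even_mult_iff)
  then have even: "even (lm + int s)" "even (lm - int s)" by presburger+
  have "(2 * \<theta> - of_int lm) ^ 2 = 4 * \<theta> ^ 2 - 4 * of_int lm * \<theta> + of_int lm ^ 2"
    by (simp add: power2_eq_square algebra_simps)
  also have "\<dots> = 4 * (of_int lm * \<theta> + (of_nat k - of_nat mu)) - 4 * of_int lm * \<theta> + of_int lm ^ 2"
    using char_sum_nonprincipal_quadratic[OF assms] by (simp only: \<theta>_def lm_def)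
  also have "\<dots> = of_int (lm ^ 2 + 4 * (int k - int mu))" by (simp add: algebra_simps)
  also have "\<dots> = of_int (int s ^ 2)" by (simp only: Delta)
  finally have "(2 * \<theta> - of_int (lm + int s)) * (2 * \<theta> - of_int (lm - int s)) = 0"
    by (simp add: algebra_simps power2_eq_square)
  then have "2 * \<theta> = of_int (lm + int s) \<or> 2 * \<theta> = of_int (lm - int s)"
    by (simp only: mult_eq_0_iff right_minus_eq)
  moreover have "lm + int s = 2 * ((lm + int s) div 2)" "lm - int s = 2 * ((lm - int s) div 2)"
    using even by simp_all
  ultimately have "\<theta> = of_int ((lm + int s) div 2) \<or> \<theta> = of_int ((lm - int s) div 2)"
    by (metis mult_cancel_left of_int_mult of_int_numeral zero_neq_numeral)
  then show ?thesis using that even unfolding \<theta>_def lm_def by fastforce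
qed

lemma nonprincipal_char_sums_eq_if_cong:
  assumes "c1 \<in> lin_chars G" "c1 \<noteq> principal_char G" "char_sum c1 D = of_int A"
    and "c2 \<in> lin_chars G" "c2 \<noteq> principal_char G" "char_sum c2 D = of_int B"
    and cong: "[A = B] (mod q)" and not_dvd: "\<not> q dvd int s"
  shows "A = B"
proof -
  obtain A' where A': "char_sum c1 D = of_int A'"
    "2 * A' = int lam - int mu + int s \<or> 2 * A' = int lam - int mu - int s"
    using char_sum_nonprincipal_cases[OF assms(1,2)] by blast
  obtain B' where B': "char_sum c2 D = of_int B'"
    "2 * B' = int lam - int mu + int s \<or> 2 * B' = int lam - int mu - int s"
    using char_sum_nonprincipal_cases[OF assms(4,5)] by blast
  have "A' = A" "B' = B" using A'(1) B'(1) assms(3,6) by simp_all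
  then have "A = B \<or> A - B = int s \<or> B - A = int s" using A'(2) B'(2) by (elim disjE; arith)
  moreover have "q dvd A - B" using cong by (simp add: cong_iff_dvd_diff)
  ultimately show ?thesis using not_dvd by (metis dvd_minus_iff minus_diff_eq)
qed

lemma char_sum_char_power_prime_eq:
  assumes c: "c \<in> lin_chars G" "c \<noteq> principal_char G" and cp: "char_power G c p \<noteq> principal_char G"
    and p: "Factorial_Ring.prime p" "\<not> p dvd s"
  shows "char_sum (char_power G c p) D = char_sum c D"
proof -
  obtain A where A: "char_sum c D = of_int A" using char_sum_nonprincipal_cases[OF c] by blast
  obtain B where B: "char_sum (char_power G c p) D = of_int B"
    using char_sum_nonprincipal_cases[OF char_power_in_lin_chars[OF c(1)] cp] by blast
  have "[B = A] (mod int p)"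
    using char_sum_char_power_prime_cong[OF c(1) p(1) D_subset A B] by (rule cong_sym)
  then have "B = A"
    using nonprincipal_char_sums_eq_if_cong[OF char_power_in_lin_chars[OF c(1)] cp B c A] p(2) by simp
  then show ?thesis using A B by simp
qed

lemma char_sum_cong_k_if_prime_order:
  assumes "c \<in> lin_chars G" "Factorial_Ring.prime p" "char_power G c p = principal_char G" "char_sum c D = of_int A"
  shows "[A = int k] (mod int p)"
  using char_sum_char_power_prime_cong[OF assms(1,2) D_subset assms(4)] assms(3) char_sum_principal by simp

end

section \<open>Constancy of the character values on a subgroup of coprime order\<close>

locale pds_char_subgroup = pds G D v k lam mu s + char_subgroup G H
  for G (structure) and D v k lam mu s and H +
  assumes coprime_char_ord: "\<forall>\<xi>\<in>H. coprime (char_ord G \<xi>) s"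
begin

lemma prime_dvd_char_ord_not_dvd:
  assumes "c \<in> H" "Factorial_Ring.prime p" "p dvd char_ord G c"
  shows "\<not> p dvd s"
  using assms coprime_char_ord coprime_common_divisor not_prime_unit by blast

lemma char_sum_char_power_eq_if_proper_dvd:
  assumes c: "c \<in> H" and "d dvd char_ord G c" "d < char_ord G c"
  shows "char_sum (char_power G c d) D = char_sum c D"
  using assms(2,3)
proof (induction d rule: less_induct)
  case (less d)
  have c_lin: "c \<in> lin_chars G" using c subgroup_subset_lin_chars by blast
  have nonprincipal: "char_power G c e \<noteq> principal_char G" if "0 < e" "e < char_ord G c" for e
    using that char_power_eq_principal_iff[OF c_lin] dvd_imp_le by (metis not_less)
  show ?case
  proof (cases "d = 1")
    case True
    then show ?thesis by (metis char_power_1[OF c_lin])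
  next
    case False
    have "d \<noteq> 0" using less.prems char_ord_pos_pow(1)[OF c_lin] by auto
    obtain q where q: "Factorial_Ring.prime q" "q dvd d" using prime_factor_nat[OF False] by blast
    define e where "e = d div q"
    have d_eq: "d = e * q" unfolding e_def using q(2) by simp
    have "0 < e" using \<open>d \<noteq> 0\<close> d_eq by simp
    moreover have "e < d" using \<open>0 < e\<close> prime_gt_1_nat[OF q(1)] d_eq by simp
    ultimately have e: "0 < e" "e < d" .
    have "e dvd char_ord G c" using less.prems(1) unfolding d_eq by (rule dvd_mult_left)
    moreover have "e < char_ord G c" using e(2) less.prems(2) by linarith
    ultimately have IH: "char_sum (char_power G c e) D = char_sum c D" using less.IH[OF e(2)] by blast
    have e_nonprincipal: "char_power G c e \<noteq> principal_char G" using nonprincipal[OF e(1)] e less.prems(2) by simp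
    have d_nonprincipal: "char_power G c d \<noteq> principal_char G" using nonprincipal e less.prems(2) by simp
    have pow: "char_power G (char_power G c e) q = char_power G c d"
      by (simp add: char_power_char_power d_eq)
    have "\<not> q dvd s"
      using prime_dvd_char_ord_not_dvd[OF c q(1) dvd_trans[OF q(2) less.prems(1)]] .
    then have "char_sum (char_power G c d) D = char_sum (char_power G c e) D"
      using char_sum_char_power_prime_eq[OF char_power_in_lin_chars[OF c_lin] e_nonprincipal _ q(1)]
        d_nonprincipal unfolding pow by blast
    then show ?thesis using IH by simp
  qed
qed

lemma ex_prime_order_char_with_equal_sum:
  assumes c: "c \<in> H" "c \<noteq> principal_char G"
  obtains p \<alpha> where "Factorial_Ring.prime p" "\<alpha> \<in> H" "\<alpha> \<noteq> principal_char G" "char_power G \<alpha> p = principal_char G"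
    and "char_sum \<alpha> D = char_sum c D"
proof -
  have c_lin: "c \<in> lin_chars G" using c subgroup_subset_lin_chars by blast
  define m where "m = char_ord G c"
  have "m > 0" "m \<noteq> 1" using char_ord_pos_pow(1)[OF c_lin] char_ord_eq_1_iff[OF c_lin] c(2) by (auto simp: m_def)
  obtain p where p: "Factorial_Ring.prime p" "p dvd m" using prime_factor_nat[OF \<open>m \<noteq> 1\<close>] by blast
  define d where "d = m div p"
  have m_eq: "m = d * p" unfolding d_def using p(2) by simp
  have d: "0 < d" "d < m" "d dvd m" using \<open>m > 0\<close> m_eq prime_gt_1_nat[OF p(1)] by auto
  show ?thesis
  proof (rule that[OF p(1) char_power_in_subgroup[OF c(1)]])
    show "char_power G c d \<noteq> principal_char G"
      using d char_power_eq_principal_iff[OF c_lin] dvd_imp_le by (metis m_def not_less)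
    show "char_power G (char_power G c d) p = principal_char G"
      using char_power_eq_principal_iff[OF c_lin] by (simp add: char_power_char_power m_eq[symmetric] m_def)
    show "char_sum (char_power G c d) D = char_sum c D"
      using char_sum_char_power_eq_if_proper_dvd[OF c(1)] d unfolding m_def by blast
  qed
qed

text \<open>For distinct primes the product \<open>\<alpha>\<beta>\<close> has \<open>(\<alpha>\<beta>)\<^sup>p = \<beta>\<^sup>p\<close> and \<open>(\<alpha>\<beta>)\<^sup>q = \<alpha>\<^sup>q\<close>, which links the values
  of \<open>\<alpha>\<close> and \<open>\<beta>\<close>; for equal primes both values are \<open>\<equiv> k (mod p)\<close>.\<close>

lemma char_sum_eq_if_prime_orders:
  assumes \<alpha>: "\<alpha> \<in> H" "\<alpha> \<noteq> principal_char G" "char_power G \<alpha> p = principal_char G" "Factorial_Ring.prime p"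
    and \<beta>: "\<beta> \<in> H" "\<beta> \<noteq> principal_char G" "char_power G \<beta> q = principal_char G" "Factorial_Ring.prime q"
  shows "char_sum \<alpha> D = char_sum \<beta> D"
proof -
  have lin: "\<alpha> \<in> lin_chars G" "\<beta> \<in> lin_chars G" using \<alpha>(1) \<beta>(1) subgroup_subset_lin_chars by auto
  have ord: "char_ord G \<alpha> = p" "char_ord G \<beta> = q"
    using char_ord_eq_prime lin \<alpha>(2-4) \<beta>(2-4) by auto
  have not_dvd: "\<not> p dvd s" "\<not> q dvd s"
    using prime_dvd_char_ord_not_dvd \<alpha>(1,4) \<beta>(1,4) ord by auto
  show ?thesis
  proof (cases "p = q")
    case True
    obtain A B where A: "char_sum \<alpha> D = of_int A" and B: "char_sum \<beta> D = of_int B"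
      using char_sum_nonprincipal_cases lin \<alpha>(2) \<beta>(2) by metis
    have "[A = B] (mod int p)"
      using char_sum_cong_k_if_prime_order[OF lin(1) \<alpha>(4,3) A] True
        char_sum_cong_k_if_prime_order[OF lin(2) \<beta>(4,3) B] by (metis cong_sym cong_trans)
    then have "A = B" using nonprincipal_char_sums_eq_if_cong[OF lin(1) \<alpha>(2) A lin(2) \<beta>(2) B] not_dvd by simp
    then show ?thesis using A B by simp
  next
    case False
    define \<psi> where "\<psi> = (\<lambda>x. \<alpha> x * \<beta> x)"
    have \<psi>: "\<psi> \<in> H" "\<psi> \<in> lin_chars G"
      unfolding \<psi>_def using char_mult_in_subgroup \<alpha>(1) \<beta>(1) subgroup_subset_lin_chars by auto
    have \<psi>_pow: "char_power G \<psi> p = char_power G \<beta> p" "char_power G \<psi> q = char_power G \<alpha> q"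
      using char_power_mult_principal_left[OF lin(1) \<alpha>(3), of \<beta>]
        char_power_mult_principal_left[OF lin(2) \<beta>(3), of \<alpha>]
      by (simp_all add: \<psi>_def mult.commute)
    have nonprincipal_pow: "char_power G \<beta> p \<noteq> principal_char G" "char_power G \<alpha> q \<noteq> principal_char G"
      using char_power_eq_principal_iff lin ord False \<alpha>(4) \<beta>(4) primes_dvd_imp_eq by metis+
    have "char_power G (principal_char G) p = principal_char G"
      by (simp add: char_power_def principal_char_def fun_eq_iff)
    then have "\<psi> \<noteq> principal_char G" using \<psi>_pow(1) nonprincipal_pow(1) by auto
    then have "char_sum \<psi> D = char_sum \<beta> D" "char_sum \<psi> D = char_sum \<alpha> D"
      using char_sum_char_power_prime_eq[OF \<psi>(2)] char_sum_char_power_prime_eq lin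
        \<alpha>(2,4) \<beta>(2,4) not_dvd \<psi>_pow nonprincipal_pow by metis+
    then show ?thesis by simp
  qed
qed

lemma char_sum_nonprincipal_constant:
  assumes "\<xi> \<in> H" "\<xi> \<noteq> principal_char G" "\<xi>' \<in> H" "\<xi>' \<noteq> principal_char G"
  shows "char_sum \<xi> D = char_sum \<xi>' D"
  using ex_prime_order_char_with_equal_sum[OF assms(1,2)] ex_prime_order_char_with_equal_sum[OF assms(3,4)]
    char_sum_eq_if_prime_orders by metis

lemma card_coset_inter:
  assumes a: "a \<in> carrier G - kernel_of_chars G H" and \<xi>: "\<xi> \<in> H" "\<xi> \<noteq> principal_char G"
  shows "of_nat (card ((kernel_of_chars G H #> a) \<inter> D)) = (of_nat k - char_sum \<xi> D) / of_nat (card H)"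
proof -
  define N where "N = kernel_of_chars G H"
  define \<theta> where "\<theta> = char_sum \<xi> D"
  define b where "b = inv a"
  have b: "b \<in> carrier G" "b \<notin> N"
    using a inv_in_kernel_of_chars_iff unfolding b_def N_def by auto
  have char_sum_eq: "char_sum \<xi>' D = \<theta> + (if \<xi>' = principal_char G then of_nat k - \<theta> else 0)" if "\<xi>' \<in> H" for \<xi>'
    using that char_sum_nonprincipal_constant[OF _ _ \<xi>] char_sum_principal by (auto simp: \<theta>_def)
  have "of_nat (card H) * of_nat (card {d \<in> D. d \<otimes> b \<in> N})
      = (\<Sum>d\<in>D. if d \<otimes> b \<in> N then of_nat (card H) else (0::complex))"
    by (simp add: sum.inter_filter[symmetric] finite_subset[OF D_subset finite_carrier])
  also have "\<dots> = (\<Sum>d\<in>D. \<Sum>\<xi>'\<in>H. \<xi>' (d \<otimes> b))"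
    using b(1) by (intro sum.cong refl) (simp add: sum_subgroup_chars N_def D_subset[THEN subsetD])
  also have "\<dots> = (\<Sum>d\<in>D. \<Sum>\<xi>'\<in>H. \<xi>' b * \<xi>' d)"
    using b(1) by (intro sum.cong refl)
      (simp add: lin_char_mult subgroup_subset_lin_chars[THEN subsetD] D_subset[THEN subsetD] mult.commute)
  also have "\<dots> = (\<Sum>\<xi>'\<in>H. \<xi>' b * char_sum \<xi>' D)"
    by (subst sum.swap) (simp add: char_sum_def sum_distrib_left)
  also have "\<dots> = (\<Sum>\<xi>'\<in>H. \<xi>' b * \<theta> + (if \<xi>' = principal_char G then of_nat k - \<theta> else 0))"
    using b(1) by (intro sum.cong refl) (auto simp: char_sum_eq distrib_left principal_char_def)
  also have "\<dots> = \<theta> * (\<Sum>\<xi>'\<in>H. \<xi>' b) + (of_nat k - \<theta>)"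
    using finite_subgroup principal_char_in_subgroup
    by (simp add: sum.distrib sum_distrib_left mult.commute)
  also have "\<dots> = of_nat k - \<theta>"
    using sum_subgroup_chars[OF b(1)] b(2) by (simp add: N_def)
  moreover have "(N #> a) \<inter> D = {d \<in> D. d \<otimes> b \<in> N}"
    unfolding b_def using a D_subset by (intro r_coset_inter_eq) (auto simp: N_def kernel_of_chars_def)
  moreover have "card H > 0" using finite_subgroup principal_char_in_subgroup card_gt_0_iff by blast
  ultimately show ?thesis by (simp add: N_def \<theta>_def field_simps)
qed

end

theorem mainTheorem13:
  fixes G :: "('a, 'b) monoid_scheme" and D :: "'a set"
    and v k lam mu s :: nat and H :: "('a \<Rightarrow> complex) set"
  assumes "group G" and "finite (carrier G)"
    and "is_PDS G D v k lam mu" and "regular_PDS G D"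
    and "0 < mu" and "mu < k"
    and "int s ^ 2 = pds_Delta k lam mu"
    and "subgroup H (char_group G)"
    and "H \<noteq> {principal_char G}"
    and "\<forall>\<xi> \<in> H. coprime (char_ord G \<xi>) s"
  shows "\<forall>a \<in> carrier G - {g \<in> carrier G. \<forall>\<xi> \<in> H. \<xi> g = 1}.
           \<forall>\<xi> \<in> H. \<xi> \<noteq> principal_char G \<longrightarrow>
             of_nat (card (({g \<in> carrier G. \<forall>\<xi> \<in> H. \<xi> g = 1} #>\<^bsub>G\<^esub> a) \<inter> D))
               = (of_nat k - char_sum \<xi> D) / of_nat (card H)"
proof -
  interpret pds_char_subgroup G D v k lam mu s H
    using assms by (simp add: pds_char_subgroup_def pds_char_subgroup_axioms_def pds_def pds_axioms_def
        char_subgroup_def char_subgroup_axioms_def finite_group_def finite_group_axioms_def)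
  show ?thesis using card_coset_inter unfolding kernel_of_chars_def by blast
qed

end
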